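(* Let $F$ be a field of characteristic zero and $r$ a positive integer. Let $\mathfrak{L}$ be an $(r+1)$-dimensional solvable, non-nilpotent (left) Leibniz algebra over $F$ whose nilradical is the $r$-dimensional abelian algebra $A(r)$. Choose a basis $\{n_1,\dots,n_r,x\}$ of $\mathfrak{L}$ with $n_1,\dots,n_r$ a basis of $A(r)$ and $x\in\mathfrak{L}\setminus A(r)$. Then $[n_i,n_j]=0$ for all $i,j$, and there are matrices $L,R\in F^{r\times r}$ and a vector $\sigma=(\sigma_1,\dots,\sigma_r)^T\in F^r$ such that $$[x,n_i]=\sum_j L_{ij}n_j,\qquad [n_i,x]=\sum_jR_{ij}n_j,\qquad [x,x]=\sum_j\sigma_jn_j,$$ and $\sigma$ lies in the null space of $R^T$ (i.e. $R^T\sigma=0$).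
   Context: A (left) Leibniz algebra is a vector space with bilinear product satisfying $[x,[y,z]]=[[x,y],z]+[y,[x,z]]$. Solvable: derived series $\mathfrak{L}^{(1)}=[\mathfrak{L},\mathfrak{L}]$, $\mathfrak{L}^{(n+1)}=[\mathfrak{L}^{(n)},\mathfrak{L}^{(n)}]$ eventually zero. Nilpotent: lower central series $\mathfrak{L}^2=[\mathfrak{L},\mathfrak{L}]$, $\mathfrak{L}^{k+1}=[\mathfrak{L},\mathfrak{L}^k]$ eventually zero. Nilradical: the unique maximal nilpotent ideal. $A(r)$ is the $r$-dimensional algebra with all products zero. *)

theory Defs
  imports Complex_Main
begin

definition bilinear_prod :: "('a::field \<Rightarrow> 'v::ab_group_add \<Rightarrow> 'v) \<Rightarrow> ('v \<Rightarrow> 'v \<Rightarrow> 'v) \<Rightarrow> bool" where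
  "bilinear_prod s b \<longleftrightarrow>
     (\<forall>u v w. b (u + v) w = b u w + b v w) \<and>
     (\<forall>u v w. b u (v + w) = b u v + b u w) \<and>
     (\<forall>c u v. b (s c u) v = s c (b u v)) \<and>
     (\<forall>c u v. b u (s c v) = s c (b u v))"

definition leibniz_algebra :: "('a::field \<Rightarrow> 'v::ab_group_add \<Rightarrow> 'v) \<Rightarrow> ('v \<Rightarrow> 'v \<Rightarrow> 'v) \<Rightarrow> bool" where
  "leibniz_algebra s b \<longleftrightarrow> vector_space s \<and> bilinear_prod s b \<and>
     (\<forall>x y z. b x (b y z) = b (b x y) z + b y (b x z))"

definition prod_space :: "('a::field \<Rightarrow> 'v::ab_group_add \<Rightarrow> 'v) \<Rightarrow> ('v \<Rightarrow> 'v \<Rightarrow> 'v) \<Rightarrow> 'v set \<Rightarrow> 'v set \<Rightarrow> 'v set" where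
  "prod_space s b A B = module.span s {b u v | u v. u \<in> A \<and> v \<in> B}"

fun derived_series :: "('a::field \<Rightarrow> 'v::ab_group_add \<Rightarrow> 'v) \<Rightarrow> ('v \<Rightarrow> 'v \<Rightarrow> 'v) \<Rightarrow> nat \<Rightarrow> 'v set" where
  "derived_series s b 0 = UNIV"
| "derived_series s b (Suc n) = prod_space s b (derived_series s b n) (derived_series s b n)"

text \<open>Lower central series of a subalgebra I (viewed as an algebra in its own right):
  lcs I 0 = I (= I^1), lcs I (k+1) = [I, lcs I k] (= I^(k+2)).\<close>
fun lower_central :: "('a::field \<Rightarrow> 'v::ab_group_add \<Rightarrow> 'v) \<Rightarrow> ('v \<Rightarrow> 'v \<Rightarrow> 'v) \<Rightarrow> 'v set \<Rightarrow> nat \<Rightarrow> 'v set" where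
  "lower_central s b I 0 = I"
| "lower_central s b I (Suc k) = prod_space s b I (lower_central s b I k)"

definition solvable_alg :: "('a::field \<Rightarrow> 'v::ab_group_add \<Rightarrow> 'v) \<Rightarrow> ('v \<Rightarrow> 'v \<Rightarrow> 'v) \<Rightarrow> bool" where
  "solvable_alg s b \<longleftrightarrow> (\<exists>n. derived_series s b n = {0})"

definition nilpotent_sub :: "('a::field \<Rightarrow> 'v::ab_group_add \<Rightarrow> 'v) \<Rightarrow> ('v \<Rightarrow> 'v \<Rightarrow> 'v) \<Rightarrow> 'v set \<Rightarrow> bool" where
  "nilpotent_sub s b I \<longleftrightarrow> (\<exists>k. lower_central s b I k = {0})"

definition nilpotent_alg :: "('a::field \<Rightarrow> 'v::ab_group_add \<Rightarrow> 'v) \<Rightarrow> ('v \<Rightarrow> 'v \<Rightarrow> 'v) \<Rightarrow> bool" where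
  "nilpotent_alg s b \<longleftrightarrow> nilpotent_sub s b UNIV"

definition alg_ideal :: "('a::field \<Rightarrow> 'v::ab_group_add \<Rightarrow> 'v) \<Rightarrow> ('v \<Rightarrow> 'v \<Rightarrow> 'v) \<Rightarrow> 'v set \<Rightarrow> bool" where
  "alg_ideal s b I \<longleftrightarrow> module.subspace s I \<and> (\<forall>u\<in>I. \<forall>v. b u v \<in> I \<and> b v u \<in> I)"

definition nilradical :: "('a::field \<Rightarrow> 'v::ab_group_add \<Rightarrow> 'v) \<Rightarrow> ('v \<Rightarrow> 'v \<Rightarrow> 'v) \<Rightarrow> 'v set \<Rightarrow> bool" where
  "nilradical s b N \<longleftrightarrow> alg_ideal s b N \<and> nilpotent_sub s b N \<and>
     (\<forall>M. alg_ideal s b M \<and> nilpotent_sub s b M \<longrightarrow> M \<subseteq> N)"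

end

theory Submission
  imports Defs
begin

text \<open>In a left Leibniz algebra the identity with \<open>x = y = a\<close> reads \<open>[[a,a],z] = 0\<close>: squares are
  left annihilators. Hence the span of all squares is an abelian ideal, so it lies in the nilradical;
  in particular \<open>[x,x] \<in> N\<close>, which gives \<open>\<sigma>\<close>. Expanding \<open>0 = [[x,x],x] = \<Sum>\<^sub>i \<sigma>\<^sub>i [n\<^sub>i,x]\<close> in the
  basis gives \<open>R\<^sup>T \<sigma> = 0\<close>.\<close>

lemma bilinear_prod_simps:
  assumes "bilinear_prod s b"
  shows "b 0 v = 0" "b v 0 = 0" "b (u + w) v = b u v + b w v" "b v (u + w) = b v u + b v w"
    "b (s c u) v = s c (b u v)" "b v (s c u) = s c (b v u)"
proof -
  have "b (0 + 0) v = b 0 v + b 0 v" using assms unfolding bilinear_prod_def by blast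
  then show "b 0 v = 0" by simp
  have "b v (0 + 0) = b v 0 + b v 0" using assms unfolding bilinear_prod_def by blast
  then show "b v 0 = 0" by simp
qed (use assms in \<open>auto simp: bilinear_prod_def\<close>)

lemma bilinear_prod_sum_left:
  assumes "bilinear_prod s b"
  shows "b (\<Sum>i\<in>A. f i) v = (\<Sum>i\<in>A. b (f i) v)"
  by (induct A rule: infinite_finite_induct) (auto simp: bilinear_prod_simps[OF assms])

lemma (in vector_space) bilinear_prod_span_left_zero:
  assumes "bilinear_prod scale b" "u \<in> span S" "\<forall>w\<in>S. b w v = 0"
  shows "b u v = 0"
  using assms(2) by (induct rule: span_induct_alt) (simp_all add: bilinear_prod_simps[OF assms(1)] assms(3))

lemma (in vector_space) bilinear_prod_sum_left_coords:
  assumes "bilinear_prod scale b" "\<forall>i\<in>A. b (n i) x = (\<Sum>j\<in>A. R i j *s n j)"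
  shows "b (\<Sum>i\<in>A. \<sigma> i *s n i) x = (\<Sum>j\<in>A. (\<Sum>i\<in>A. R i j * \<sigma> i) *s n j)"
proof -
  have "b (\<Sum>i\<in>A. \<sigma> i *s n i) x = (\<Sum>i\<in>A. \<Sum>j\<in>A. (\<sigma> i * R i j) *s n j)"
    by (simp add: bilinear_prod_sum_left[OF assms(1)] bilinear_prod_simps[OF assms(1)]
        assms(2) scale_sum_right)
  also have "\<dots> = (\<Sum>j\<in>A. \<Sum>i\<in>A. (\<sigma> i * R i j) *s n j)"
    by (rule sum.swap)
  finally show ?thesis
    by (simp add: scale_sum_left mult.commute)
qed

lemma (in module) span_image_sum_coords:
  assumes "finite A" "inj_on n A" "y \<in> span (n ` A)"
  shows "\<exists>c. y = (\<Sum>j\<in>A. c j *s n j)"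
proof -
  from assms(1,3) obtain u where "y = (\<Sum>v\<in>n ` A. u v *s v)"
    by (auto simp: span_finite)
  also have "\<dots> = (\<Sum>j\<in>A. u (n j) *s n j)"
    by (simp add: sum.reindex[OF assms(2)])
  finally show ?thesis by (rule exI[of _ "\<lambda>j. u (n j)"])
qed

lemma (in module) independent_image_sum_eq_0:
  assumes "finite A" "inj_on n A" "\<not> dependent (n ` A)"
    and "(\<Sum>j\<in>A. c j *s n j) = 0" "j \<in> A"
  shows "c j = 0"
proof -
  let ?u = "\<lambda>v. c (the_inv_into A n v)"
  have "(\<Sum>v\<in>n ` A. ?u v *s v) = (\<Sum>j\<in>A. c j *s n j)"
    by (simp add: sum.reindex[OF assms(2)] the_inv_into_f_f[OF assms(2)])
  then have "\<forall>v\<in>n ` A. ?u v = 0"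
    using assms(1,3,4) dependent_finite[of "n ` A"] by auto
  then show ?thesis
    using assms(5) by (auto simp: the_inv_into_f_f[OF assms(2)])
qed

lemma nilpotent_sub_if_abelian:
  assumes "vector_space s" "0 \<in> I" "\<forall>u\<in>I. \<forall>v\<in>I. b u v = 0"
  shows "nilpotent_sub s b I"
proof -
  interpret vector_space s by fact
  have "{b u v | u v. u \<in> I \<and> v \<in> I} = insert 0 {}"
    using assms(2,3) by (auto intro!: exI[of _ 0])
  then have "lower_central s b I (Suc 0) = {0}"
    by (simp add: prod_space_def)
  then show ?thesis
    unfolding nilpotent_sub_def by blast
qed

definition leibniz_kernel :: "('a::field \<Rightarrow> 'v::ab_group_add \<Rightarrow> 'v) \<Rightarrow> ('v \<Rightarrow> 'v \<Rightarrow> 'v) \<Rightarrow> 'v set" where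
  "leibniz_kernel s b = module.span s {b a a | a. True}"

lemma leibniz_square_left_zero:
  assumes "leibniz_algebra s b"
  shows "b (b a a) z = 0"
proof -
  have "b a (b a z) = b (b a a) z + b a (b a z)"
    using assms unfolding leibniz_algebra_def by blast
  then show ?thesis by simp
qed

lemma leibniz_kernel_left_zero:
  assumes "leibniz_algebra s b" "u \<in> leibniz_kernel s b"
  shows "b u v = 0"
proof -
  have "vector_space s" "bilinear_prod s b"
    using assms(1) unfolding leibniz_algebra_def by blast+
  then show ?thesis
    using assms(2) leibniz_square_left_zero[OF assms(1)]
    by (auto simp: leibniz_kernel_def intro: vector_space.bilinear_prod_span_left_zero)
qed

lemma leibniz_kernel_right_closed:
  assumes "leibniz_algebra s b" "u \<in> leibniz_kernel s b"
  shows "b v u \<in> leibniz_kernel s b"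
proof -
  interpret vector_space s
    using assms(1) unfolding leibniz_algebra_def by blast
  have bl: "bilinear_prod s b"
    using assms(1) unfolding leibniz_algebra_def by blast
  note simps = bilinear_prod_simps[OF bl]
  show ?thesis
    using assms(2) unfolding leibniz_kernel_def
  proof (induct rule: span_induct_alt)
    case base
    show ?case by (simp add: simps span_zero)
  next
    case (step c y w)
    then obtain a where y: "y = b a a" by blast
    \<comment> \<open>\<open>[v,[a,a]] = [v+[a,a], v+[a,a]] - [v,v]\<close>, since \<open>[a,a]\<close> annihilates from the left\<close>
    have "b v y = b (v + y) (v + y) - b v v"
      using y by (simp add: simps leibniz_square_left_zero[OF assms(1)])
    also have "\<dots> \<in> span {b a a | a. True}"
      by (rule span_diff) (auto intro: span_base)
    finally show ?case
      using step by (simp add: simps span_add span_scale)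
  qed
qed

lemma leibniz_kernel_ideal:
  assumes "leibniz_algebra s b"
  shows "alg_ideal s b (leibniz_kernel s b)"
proof -
  interpret vector_space s
    using assms unfolding leibniz_algebra_def by blast
  show ?thesis
    unfolding alg_ideal_def
    using leibniz_kernel_left_zero[OF assms] leibniz_kernel_right_closed[OF assms]
    by (auto simp: leibniz_kernel_def subspace_span span_zero)
qed

lemma leibniz_square_in_nilradical:
  assumes "leibniz_algebra s b" "nilradical s b N"
  shows "b a a \<in> N"
proof -
  interpret vector_space s
    using assms(1) unfolding leibniz_algebra_def by blast
  have "nilpotent_sub s b (leibniz_kernel s b)"
    using leibniz_kernel_left_zero[OF assms(1)]
    by (intro nilpotent_sub_if_abelian) (auto simp: leibniz_kernel_def span_zero vector_space_axioms)
  then have "leibniz_kernel s b \<subseteq> N"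
    using assms(2) leibniz_kernel_ideal[OF assms(1)] unfolding nilradical_def by blast
  then show ?thesis
    unfolding leibniz_kernel_def by (auto intro: span_base)
qed

theorem theorem4p3:
  fixes s :: "'a::field_char_0 \<Rightarrow> 'v::ab_group_add \<Rightarrow> 'v"
    and b :: "'v \<Rightarrow> 'v \<Rightarrow> 'v"
    and N :: "'v set"
    and n :: "nat \<Rightarrow> 'v"
    and x :: 'v
    and r :: nat
  assumes r_pos: "r > 0"
    and leib: "leibniz_algebra s b"
    and dimL: "vector_space.dim s (UNIV :: 'v set) = r + 1"
    and solv: "solvable_alg s b"
    and nonnil: "\<not> nilpotent_alg s b"
    and nilrad: "nilradical s b N"
    and N_abelian: "\<forall>u\<in>N. \<forall>v\<in>N. b u v = 0"
    and dimN: "vector_space.dim s N = r"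
    and n_inj: "inj_on n {..<r}"
    and n_indep: "\<not> module.dependent s (n ` {..<r})"
    and n_span: "module.span s (n ` {..<r}) = N"
    and x_notin: "x \<notin> N"
  shows "(\<forall>i<r. \<forall>j<r. b (n i) (n j) = 0) \<and>
    (\<exists>(L :: nat \<Rightarrow> nat \<Rightarrow> 'a) (R :: nat \<Rightarrow> nat \<Rightarrow> 'a) (\<sigma> :: nat \<Rightarrow> 'a).
       (\<forall>i<r. b x (n i) = (\<Sum>j<r. s (L i j) (n j))) \<and>
       (\<forall>i<r. b (n i) x = (\<Sum>j<r. s (R i j) (n j))) \<and>
       b x x = (\<Sum>j<r. s (\<sigma> j) (n j)) \<and>
       (\<forall>j<r. (\<Sum>i<r. R i j * \<sigma> i) = 0))"
proof -
  interpret vector_space s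
    using leib unfolding leibniz_algebra_def by blast
  have bl: "bilinear_prod s b"
    using leib unfolding leibniz_algebra_def by blast
  have n_in_N: "n i \<in> N" if "i < r" for i
    unfolding n_span[symmetric] using that by (intro span_base) simp
  have coords: "\<exists>c. y = (\<Sum>j<r. s (c j) (n j))" if "y \<in> N" for y
    using span_image_sum_coords[of "{..<r}" n y] n_inj n_span that by simp
  have "b u v \<in> N \<and> b v u \<in> N" if "u \<in> N" for u v
    using nilrad that unfolding nilradical_def alg_ideal_def by blast
  then have "\<forall>i<r. \<exists>c. b x (n i) = (\<Sum>j<r. s (c j) (n j))"
    and "\<forall>i<r. \<exists>c. b (n i) x = (\<Sum>j<r. s (c j) (n j))"
    using coords n_in_N by blast+
  then obtain L R where
    L: "\<forall>i<r. b x (n i) = (\<Sum>j<r. s (L i j) (n j))" and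
    R: "\<forall>i<r. b (n i) x = (\<Sum>j<r. s (R i j) (n j))"
    by metis
  obtain \<sigma> where \<sigma>: "b x x = (\<Sum>j<r. s (\<sigma> j) (n j))"
    using coords leibniz_square_in_nilradical[OF leib nilrad] by blast
  have "(\<Sum>j<r. s (\<Sum>i<r. R i j * \<sigma> i) (n j)) = b (b x x) x"
    using bilinear_prod_sum_left_coords[OF bl, of "{..<r}" n x R \<sigma>] R \<sigma> by simp
  also have "\<dots> = 0"
    by (rule leibniz_square_left_zero[OF leib])
  finally have "\<forall>j<r. (\<Sum>i<r. R i j * \<sigma> i) = 0"
    using independent_image_sum_eq_0[OF _ n_inj n_indep, of "\<lambda>j. \<Sum>i<r. R i j * \<sigma> i"]
    by simp
  then show ?thesis
    using N_abelian n_in_N L R \<sigma> by blast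
qed

end
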